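(* Let $s\in S$. The composition of the inclusion $\mathrm{Der}^S_s\overline A_{H,S}\hookrightarrow\mathrm{Der}^{SS}\overline A_{H,S}$ with the projection $\mathrm{Der}^{SS}\overline A_{H,S}\to\mathrm{ODer}^{SS}\overline A_{H,S}$ is surjective, and its kernel is spanned by the inner derivations $[X_s^n,\,\cdot\,]$, $n\ge0$.
   Context: Let $H$ be a finite-dimensional symplectic $\mathbb Q$-vector space with symplectic basis $\{p_i,q_i\}$ and $S$ a non-empty finite set. $A_{H,S}$ is the free associative algebra on $H\oplus\mathbb Q[S]$ (generators $p_i,q_i$, and $X_t$ for $t\in S$), and $\overline A_{H,S}$ is its quotient by the two-sided ideal generated by $\sum_i[p_i,q_i]+\sum_{t\in S}X_t$ (so $\overline A_{H,S}$ is free on $p_i,q_i$, $X_t$, $t\neq s$). A derivation $\mathcal D$ of $\overline A_{H,S}$ is semi-special if for every $t\in S$ there is $B_t\in\overline A_{H,S}$ with $\mathcal D(X_t)=[B_t,X_t]$; they form a Lie algebra $\mathrm{Der}^{SS}\overline A_{H,S}$ containing all inner derivations $[B,\cdot\,]$. $\mathrm{ODer}^{SS}\overline A_{H,S}$ is the quotient of $\mathrm{Der}^{SS}\overline A_{H,S}$ by the inner derivations. $\mathrm{Der}^S_s\overline A_{H,S}\subset\mathrm{Der}^{SS}\overline A_{H,S}$ is the Lie subalgebra of semi-special derivations killing $X_s$. *)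

theory Defs
  imports Complex_Main
begin

text \<open>Generators of the free associative algebra A_{H,S}: p_i, q_i (i ranging over the
index set of a symplectic basis of H) and X_t (t in S).\<close>
datatype ('i, 't) gen = P 'i | Q 'i | X 't

text \<open>Elements of the free associative Q-algebra: finitely supported functions from words
in the generators to the rationals (noncommutative polynomials).\<close>
type_synonym ('i, 't) fa = "('i, 't) gen list \<Rightarrow> rat"

definition gens :: "'i set \<Rightarrow> 't set \<Rightarrow> ('i, 't) gen set" where
  "gens I S = P ` I \<union> Q ` I \<union> X ` S"

definition alg :: "'i set \<Rightarrow> 't set \<Rightarrow> ('i, 't) fa set" where
  "alg I S = {f. finite {w. f w \<noteq> 0} \<and> (\<forall>w. f w \<noteq> 0 \<longrightarrow> set w \<subseteq> gens I S)}"

definition fa_zero :: "('i, 't) fa" where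
  "fa_zero = (\<lambda>w. 0)"

definition fa_one :: "('i, 't) fa" where
  "fa_one = (\<lambda>w. if w = [] then 1 else 0)"

definition fa_gen :: "('i, 't) gen \<Rightarrow> ('i, 't) fa" where
  "fa_gen g = (\<lambda>w. if w = [g] then 1 else 0)"

definition fa_add :: "('i, 't) fa \<Rightarrow> ('i, 't) fa \<Rightarrow> ('i, 't) fa" where
  "fa_add f g = (\<lambda>w. f w + g w)"

definition fa_smult :: "rat \<Rightarrow> ('i, 't) fa \<Rightarrow> ('i, 't) fa" where
  "fa_smult c f = (\<lambda>w. c * f w)"

definition fa_diff :: "('i, 't) fa \<Rightarrow> ('i, 't) fa \<Rightarrow> ('i, 't) fa" where
  "fa_diff f g = (\<lambda>w. f w - g w)"

definition fa_mult :: "('i, 't) fa \<Rightarrow> ('i, 't) fa \<Rightarrow> ('i, 't) fa" where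
  "fa_mult f g = (\<lambda>w. \<Sum>k\<le>length w. f (take k w) * g (drop k w))"

definition fa_comm :: "('i, 't) fa \<Rightarrow> ('i, 't) fa \<Rightarrow> ('i, 't) fa" where
  "fa_comm a b = fa_diff (fa_mult a b) (fa_mult b a)"

definition fa_pow :: "('i, 't) fa \<Rightarrow> nat \<Rightarrow> ('i, 't) fa" where
  "fa_pow a n = ((fa_mult a) ^^ n) fa_one"

definition relator :: "'i set \<Rightarrow> 't set \<Rightarrow> ('i, 't) fa" where
  "relator I S = (\<lambda>w. (\<Sum>i\<in>I. fa_comm (fa_gen (P i)) (fa_gen (Q i)) w)
                      + (\<Sum>t\<in>S. fa_gen (X t) w))"

inductive_set rel_ideal :: "'i set \<Rightarrow> 't set \<Rightarrow> ('i, 't) fa set" for I S where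
  zero: "fa_zero \<in> rel_ideal I S"
| step: "a \<in> alg I S \<Longrightarrow> b \<in> alg I S \<Longrightarrow> x \<in> rel_ideal I S \<Longrightarrow>
         fa_add (fa_mult (fa_mult a (relator I S)) b) x \<in> rel_ideal I S"

text \<open>Congruence modulo the ideal: equality in the quotient Abar_{H,S}.\<close>
definition qeq :: "'i set \<Rightarrow> 't set \<Rightarrow> ('i, 't) fa \<Rightarrow> ('i, 't) fa \<Rightarrow> bool" where
  "qeq I S x y \<longleftrightarrow> fa_diff x y \<in> rel_ideal I S"

text \<open>A derivation of Abar_{H,S}, represented by a map on representatives in A_{H,S}
that respects the congruence and is Q-linear and Leibniz modulo the ideal.\<close>
definition is_der :: "'i set \<Rightarrow> 't set \<Rightarrow> (('i, 't) fa \<Rightarrow> ('i, 't) fa) \<Rightarrow> bool" where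
  "is_der I S D \<longleftrightarrow>
     (\<forall>x\<in>alg I S. D x \<in> alg I S) \<and>
     (\<forall>x\<in>alg I S. \<forall>y\<in>alg I S. qeq I S x y \<longrightarrow> qeq I S (D x) (D y)) \<and>
     (\<forall>x\<in>alg I S. \<forall>y\<in>alg I S. qeq I S (D (fa_add x y)) (fa_add (D x) (D y))) \<and>
     (\<forall>x\<in>alg I S. \<forall>c. qeq I S (D (fa_smult c x)) (fa_smult c (D x))) \<and>
     (\<forall>x\<in>alg I S. \<forall>y\<in>alg I S.
        qeq I S (D (fa_mult x y)) (fa_add (fa_mult (D x) y) (fa_mult x (D y))))"

definition is_semispecial :: "'i set \<Rightarrow> 't set \<Rightarrow> (('i, 't) fa \<Rightarrow> ('i, 't) fa) \<Rightarrow> bool" where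
  "is_semispecial I S D \<longleftrightarrow> is_der I S D \<and>
     (\<forall>t\<in>S. \<exists>B\<in>alg I S. qeq I S (D (fa_gen (X t))) (fa_comm B (fa_gen (X t))))"

definition is_der_s :: "'i set \<Rightarrow> 't set \<Rightarrow> 't \<Rightarrow> (('i, 't) fa \<Rightarrow> ('i, 't) fa) \<Rightarrow> bool" where
  "is_der_s I S s D \<longleftrightarrow> is_semispecial I S D \<and> qeq I S (D (fa_gen (X s))) fa_zero"

definition is_inner :: "'i set \<Rightarrow> 't set \<Rightarrow> (('i, 't) fa \<Rightarrow> ('i, 't) fa) \<Rightarrow> bool" where
  "is_inner I S D \<longleftrightarrow> (\<exists>B\<in>alg I S. \<forall>x\<in>alg I S. qeq I S (D x) (fa_comm B x))"

end

theory Submission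
  imports Defs "HOL-Library.Poly_Mapping"
begin

(*
  Surjectivity: if D(X_s) = [B_s, X_s], then D - [B_s, -] is semi-special and kills X_s.  The
  maps [X_s^n, -] lie in Der^S_s because X_s^n commutes with X_s.

  Kernel: if [B, -] kills X_s, then [B, X_s] lies in the relator ideal.  Substituting
  -omega - sum_{t <> t0} X_t for one generator X_{t0} (with t0 <> s when possible) is a ring
  morphism that annihilates the ideal, fixes every element modulo it, and lands in the free
  algebra on the other generators.  There the image of B commutes with the image of X_s, which
  is X_s itself or -omega (omega = sum_i [p_i, q_i]).  A coefficient-shifting argument on words
  shows that the centraliser of either element consists of the polynomials in it, so B is
  congruent to a polynomial in X_s.
*)

section \<open>Noncommutative polynomials over an alphabet\<close>

text \<open>Words form a monoid under concatenation; this turns finitely supported maps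
  from words to the rationals into the free associative algebra on the alphabet.\<close>
instantiation list :: (type) monoid_add
begin
definition zero_list :: "'a list" where "zero_list = []"
definition plus_list :: "'a list \<Rightarrow> 'a list \<Rightarrow> 'a list" where "plus_list a b = a @ b"
instance by standard (auto simp: zero_list_def plus_list_def)
end

type_synonym 'a npoly = "'a list \<Rightarrow>\<^sub>0 rat"

abbreviation coeff :: "'a npoly \<Rightarrow> 'a list \<Rightarrow> rat" where
  "coeff \<equiv> Poly_Mapping.lookup"

abbreviation supp :: "'a npoly \<Rightarrow> 'a list set" where
  "supp \<equiv> Poly_Mapping.keys"

abbreviation monom :: "'a list \<Rightarrow> rat \<Rightarrow> 'a npoly" where
  "monom \<equiv> Poly_Mapping.single"

definition scalar :: "rat \<Rightarrow> 'a npoly" where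
  "scalar c = monom [] c"

definition ad :: "'a::ring \<Rightarrow> 'a \<Rightarrow> 'a" where
  "ad B p = B * p - p * B"

lemma coeff_mult:
  fixes p q :: "'a npoly"
  shows "coeff (p * q) w = (\<Sum>k\<le>length w. coeff p (take k w) * coeff q (drop k w))"
proof -
  let ?h = "\<lambda>(a, b). coeff p a * coeff q b when w = a + b"
  let ?T = "(\<lambda>k. (take k w, drop k w)) ` {..length w}"
  have "coeff (p * q) w = prod_fun (coeff p) (coeff q) w"
    by (simp add: lookup_mult prod_fun_def)
  also have "\<dots> = Sum_any ?h"
    by (rule prod_fun_unfold_prod) auto
  also have "\<dots> = sum ?h ?T"
  proof (rule Sum_any.expand_superset)
    show "{a. ?h a \<noteq> 0} \<subseteq> ?T"
    proof
      fix x assume "x \<in> {a. ?h a \<noteq> 0}"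
      then obtain a b where "x = (a, b)" "w = a @ b" by (cases x) (auto simp: plus_list_def)
      then show "x \<in> ?T" by (auto intro!: image_eqI[where x="length a"])
    qed
  qed simp
  also have "\<dots> = (\<Sum>k\<le>length w. ?h (take k w, drop k w))"
    by (rule sum.reindex_cong[where l="\<lambda>k. (take k w, drop k w)"])
       (auto simp: inj_on_def intro: append_take_drop_id, metis length_take min.absorb2)
  finally show ?thesis by (simp add: plus_list_def)
qed

lemma coeff_scalar_mult: "coeff (scalar c * p) w = c * coeff p w"
proof -
  have "coeff (scalar c * p) w = (\<Sum>k\<le>length w. if k = 0 then c * coeff p w else 0)"
    unfolding coeff_mult by (rule sum.cong) (auto simp: scalar_def lookup_single when_def)
  then show ?thesis by simp
qed

lemma coeff_mult_scalar: "coeff (p * scalar c) w = coeff p w * c"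
proof -
  have "coeff (p * scalar c) w = (\<Sum>k\<le>length w. if k = length w then coeff p w * c else 0)"
    unfolding coeff_mult by (rule sum.cong) (auto simp: scalar_def lookup_single when_def)
  then show ?thesis by simp
qed

lemma scalar_commute: "scalar c * p = p * scalar c"
  by (rule poly_mapping_eqI) (simp add: coeff_scalar_mult coeff_mult_scalar)

lemma scalar_left_commute: "B * (scalar c * p) = scalar c * (B * p)"
  by (metis mult.assoc scalar_commute)

lemma scalar_mult: "scalar (a * b) = scalar a * scalar b"
  by (simp add: scalar_def mult_single plus_list_def)

lemma scalar_mult_mult: "scalar (a * b) * (U * V) = (scalar a * U) * (scalar b * V)"
  by (simp only: scalar_mult mult.assoc scalar_left_commute[of U b V])

lemma scalar_one: "scalar 1 = 1"
  by (simp add: scalar_def zero_list_def[symmetric])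

lemma scalar_zero: "scalar 0 = 0"
  by (simp add: scalar_def)

lemma scalar_add: "scalar (a + b) = scalar a + scalar b"
  by (simp add: scalar_def single_add)

lemma scalar_monom: "scalar c * monom w 1 = monom w c"
  by (simp add: scalar_def mult_single plus_list_def)

lemma one_monom: "(1 :: 'a npoly) = monom [] 1"
  by (metis single_one zero_list_def)

lemma monom_Cons: "monom (g # w) c = monom [g] 1 * monom w c"
  by (simp add: mult_single plus_list_def)

lemma monom_expansion: "p = (\<Sum>w\<in>supp p. monom w (coeff p w))"
proof (rule poly_mapping_eqI)
  fix v
  show "coeff p v = coeff (\<Sum>w\<in>supp p. monom w (coeff p w)) v"
    by (cases "v \<in> supp p") (simp_all add: lookup_sum lookup_single when_def in_keys_iff)
qed

lemma fa_mult_coeff: "fa_mult (coeff p) (coeff q) = coeff (p * q)"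
  by (simp add: fa_mult_def coeff_mult fun_eq_iff)

lemma fa_add_coeff: "fa_add (coeff p) (coeff q) = coeff (p + q)"
  by (simp add: fa_add_def lookup_add fun_eq_iff)

lemma fa_diff_coeff: "fa_diff (coeff p) (coeff q) = coeff (p - q)"
  by (simp add: fa_diff_def lookup_minus fun_eq_iff)

lemma fa_smult_coeff: "fa_smult c (coeff p) = coeff (scalar c * p)"
  by (simp add: fa_smult_def fun_eq_iff coeff_scalar_mult)

lemma fa_comm_coeff: "fa_comm (coeff p) (coeff q) = coeff (ad p q)"
  by (simp add: fa_comm_def ad_def fa_mult_coeff fa_diff_coeff)

lemma fa_zero_coeff: "fa_zero = coeff 0"
  by (simp add: fa_zero_def fun_eq_iff)

lemma fa_one_coeff: "fa_one = coeff 1"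
  by (simp add: fa_one_def fun_eq_iff lookup_one zero_list_def when_def)

lemma fa_gen_coeff: "fa_gen g = coeff (monom [g] 1)"
  by (simp add: fa_gen_def fun_eq_iff lookup_single when_def)

lemma fa_pow_coeff: "fa_pow (coeff p) n = coeff (p ^ n)"
  by (induct n) (simp_all add: fa_pow_def fa_one_coeff fa_mult_coeff)


section \<open>Polynomials in a given set of letters\<close>

definition poly_over :: "'a set \<Rightarrow> 'a npoly set" where
  "poly_over G = {p. \<forall>w\<in>supp p. set w \<subseteq> G}"

lemma poly_over_zero [simp]: "0 \<in> poly_over G"
  by (simp add: poly_over_def)

lemma poly_over_one [simp]: "1 \<in> poly_over G"
  by (simp add: poly_over_def zero_list_def)

lemma poly_over_scalar [simp]: "scalar c \<in> poly_over G"
  by (simp add: poly_over_def scalar_def)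

lemma poly_over_monom: "set w \<subseteq> G \<Longrightarrow> monom w c \<in> poly_over G"
  by (simp add: poly_over_def)

lemma poly_over_add [simp]: "p \<in> poly_over G \<Longrightarrow> q \<in> poly_over G \<Longrightarrow> p + q \<in> poly_over G"
  using keys_add[of p q] by (auto simp: poly_over_def)

lemma poly_over_uminus [simp]: "p \<in> poly_over G \<Longrightarrow> - p \<in> poly_over G"
  by (auto simp: poly_over_def)

lemma poly_over_diff [simp]: "p \<in> poly_over G \<Longrightarrow> q \<in> poly_over G \<Longrightarrow> p - q \<in> poly_over G"
  using poly_over_add[of p G "- q"] by simp

lemma poly_over_mult [simp]: "p \<in> poly_over G \<Longrightarrow> q \<in> poly_over G \<Longrightarrow> p * q \<in> poly_over G"
  using keys_mult[of p q] by (fastforce simp: poly_over_def plus_list_def)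

lemma poly_over_ad [simp]: "p \<in> poly_over G \<Longrightarrow> q \<in> poly_over G \<Longrightarrow> ad p q \<in> poly_over G"
  by (simp add: ad_def)

lemma poly_over_sum [simp]: "(\<And>i. i \<in> K \<Longrightarrow> f i \<in> poly_over G) \<Longrightarrow> sum f K \<in> poly_over G"
  by (induct K rule: infinite_finite_induct) auto

lemma poly_over_power [simp]: "p \<in> poly_over G \<Longrightarrow> p ^ n \<in> poly_over G"
  by (induct n) auto

lemma poly_over_empty:
  assumes "p \<in> poly_over {}"
  shows "p = scalar (coeff p [])"
proof (rule poly_mapping_eqI)
  fix w
  show "coeff p w = coeff (scalar (coeff p [])) w"
  proof (cases "w = []")
    case False
    then have "w \<notin> supp p" using assms by (auto simp: poly_over_def)
    then show ?thesis using False by (simp add: scalar_def lookup_single in_keys_iff)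
  qed (simp add: scalar_def)
qed

lemma poly_over_mono: "G \<subseteq> G' \<Longrightarrow> p \<in> poly_over G \<Longrightarrow> p \<in> poly_over G'"
  by (auto simp: poly_over_def)

abbreviation Apoly :: "'i set \<Rightarrow> 't set \<Rightarrow> ('i, 't) gen npoly set" where
  "Apoly I S \<equiv> poly_over (gens I S)"

abbreviation xgen :: "'t \<Rightarrow> ('i, 't) gen npoly" where
  "xgen t \<equiv> monom [X t] 1"

lemma xgen_Apoly: "t \<in> S \<Longrightarrow> xgen t \<in> Apoly I S"
  by (rule poly_over_monom) (simp add: gens_def)

lemma alg_eq: "alg I S = coeff ` Apoly I S"
proof (intro equalityI subsetI)
  fix x assume x: "x \<in> alg I S"
  then have fin: "finite {w. x w \<noteq> 0}" by (simp add: alg_def)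
  then have "coeff (Abs_poly_mapping x) = x" by simp
  moreover have "Abs_poly_mapping x \<in> Apoly I S"
    using x fin by (auto simp: poly_over_def alg_def in_keys_iff)
  ultimately show "x \<in> coeff ` Apoly I S" by force
next
  fix x assume "x \<in> coeff ` Apoly I S"
  then show "x \<in> alg I S" by (auto simp: alg_def poly_over_def in_keys_iff)
qed

lemma coeff_in_alg [simp]: "coeff p \<in> alg I S \<longleftrightarrow> p \<in> Apoly I S"
  unfolding alg_def poly_over_def by (auto simp: in_keys_iff simp flip: keys.rep_eq)

lemma ball_alg: "(\<forall>x\<in>alg I S. \<Phi> x) \<longleftrightarrow> (\<forall>p\<in>Apoly I S. \<Phi> (coeff p))"
  by (auto simp: alg_eq)

lemma bex_alg: "(\<exists>x\<in>alg I S. \<Phi> x) \<longleftrightarrow> (\<exists>p\<in>Apoly I S. \<Phi> (coeff p))"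
  by (auto simp: alg_eq)


section \<open>The two-sided ideal generated by one element\<close>

inductive_set gen_ideal :: "'a set \<Rightarrow> 'a npoly \<Rightarrow> 'a npoly set" for G R where
  zero: "0 \<in> gen_ideal G R"
| step: "a \<in> poly_over G \<Longrightarrow> b \<in> poly_over G \<Longrightarrow> x \<in> gen_ideal G R \<Longrightarrow>
         a * R * b + x \<in> gen_ideal G R"

lemma gen_ideal_add: "x \<in> gen_ideal G R \<Longrightarrow> y \<in> gen_ideal G R \<Longrightarrow> x + y \<in> gen_ideal G R"
  by (induct rule: gen_ideal.induct) (auto simp: add.assoc intro: gen_ideal.step)

lemma gen_ideal_uminus: "x \<in> gen_ideal G R \<Longrightarrow> - x \<in> gen_ideal G R"
proof (induct rule: gen_ideal.induct)
  case (step a b x)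
  then have "(- a) * R * b + (- x) \<in> gen_ideal G R" by (intro gen_ideal.step) auto
  then show ?case by (simp add: algebra_simps)
qed (simp add: gen_ideal.zero)

lemma gen_ideal_diff: "x \<in> gen_ideal G R \<Longrightarrow> y \<in> gen_ideal G R \<Longrightarrow> x - y \<in> gen_ideal G R"
  using gen_ideal_add[OF _ gen_ideal_uminus, of x G R y] by simp

lemma gen_ideal_lmult: "x \<in> gen_ideal G R \<Longrightarrow> c \<in> poly_over G \<Longrightarrow> c * x \<in> gen_ideal G R"
proof (induct rule: gen_ideal.induct)
  case (step a b x)
  then have "(c * a) * R * b + c * x \<in> gen_ideal G R" by (intro gen_ideal.step) auto
  then show ?case by (simp add: algebra_simps)
qed (simp add: gen_ideal.zero)

lemma gen_ideal_rmult: "x \<in> gen_ideal G R \<Longrightarrow> c \<in> poly_over G \<Longrightarrow> x * c \<in> gen_ideal G R"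
proof (induct rule: gen_ideal.induct)
  case (step a b x)
  then have "a * R * (b * c) + x * c \<in> gen_ideal G R" by (intro gen_ideal.step) auto
  then show ?case by (simp add: algebra_simps)
qed (simp add: gen_ideal.zero)

lemma gen_ideal_generator: "R \<in> gen_ideal G R"
  using gen_ideal.step[OF poly_over_one poly_over_one gen_ideal.zero] by simp

lemma gen_ideal_sum: "(\<And>i. i \<in> K \<Longrightarrow> f i \<in> gen_ideal G R) \<Longrightarrow> sum f K \<in> gen_ideal G R"
  by (induct K rule: infinite_finite_induct) (auto intro: gen_ideal.zero gen_ideal_add)

lemma gen_ideal_ad: "x \<in> gen_ideal G R \<Longrightarrow> B \<in> poly_over G \<Longrightarrow> ad B x \<in> gen_ideal G R"
  unfolding ad_def by (intro gen_ideal_diff gen_ideal_lmult gen_ideal_rmult)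

definition omega :: "'i set \<Rightarrow> ('i, 't) gen npoly" where
  "omega I = (\<Sum>i\<in>I. monom [P i, Q i] 1 - monom [Q i, P i] 1)"

definition relator_pm :: "'i set \<Rightarrow> 't set \<Rightarrow> ('i, 't) gen npoly" where
  "relator_pm I S = omega I + (\<Sum>t\<in>S. xgen t)"

abbreviation Jrel :: "'i set \<Rightarrow> 't set \<Rightarrow> ('i, 't) gen npoly set" where
  "Jrel I S \<equiv> gen_ideal (gens I S) (relator_pm I S)"

lemma relator_coeff: "relator I S = coeff (relator_pm I S)"
  by (simp add: relator_def relator_pm_def omega_def fun_eq_iff lookup_add lookup_sum
      fa_comm_coeff fa_gen_coeff ad_def mult_single plus_list_def)

lemma omega_poly_over: "(\<And>i. i \<in> I \<Longrightarrow> P i \<in> G \<and> Q i \<in> G) \<Longrightarrow> omega I \<in> poly_over G"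
  unfolding omega_def by (intro poly_over_sum poly_over_diff poly_over_monom) auto

lemma rel_ideal_eq: "rel_ideal I S = coeff ` Jrel I S"
proof (intro equalityI subsetI)
  fix x assume "x \<in> rel_ideal I S"
  then show "x \<in> coeff ` Jrel I S"
  proof induct
    case zero
    show ?case by (rule image_eqI[where x=0]) (auto simp: fa_zero_coeff intro: gen_ideal.zero)
  next
    case (step a b x)
    then obtain a' b' x' where "a' \<in> Apoly I S" "b' \<in> Apoly I S" "x' \<in> Jrel I S"
      "a = coeff a'" "b = coeff b'" "x = coeff x'" by (auto simp: alg_eq)
    then show ?case
      by (auto simp: relator_coeff fa_mult_coeff fa_add_coeff intro!: image_eqI gen_ideal.step)
  qed
next
  fix x assume "x \<in> coeff ` Jrel I S"
  then obtain p where p: "p \<in> Jrel I S" "x = coeff p" by auto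
  from p(1) have "coeff p \<in> rel_ideal I S"
  proof induct
    case zero
    show ?case using rel_ideal.zero[of I S] by (simp add: fa_zero_def)
  next
    case (step a b x)
    then have "fa_add (fa_mult (fa_mult (coeff a) (relator I S)) (coeff b)) (coeff x) \<in> rel_ideal I S"
      by (intro rel_ideal.step) simp_all
    then show ?case by (simp add: relator_coeff fa_mult_coeff fa_add_coeff)
  qed
  then show "x \<in> rel_ideal I S" using p by simp
qed

lemma qeq_coeff: "qeq I S (coeff p) (coeff q) \<longleftrightarrow> p - q \<in> Jrel I S"
  by (auto simp: qeq_def rel_ideal_eq fa_diff_coeff)

lemma qeq_refl: "qeq I S x x"
  using rel_ideal.zero[of I S] by (simp add: qeq_def fa_diff_def fa_zero_def)


section \<open>Derivations of the quotient algebra\<close>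

definition der_pm :: "'a set \<Rightarrow> 'a npoly \<Rightarrow> ('a npoly \<Rightarrow> 'a npoly) \<Rightarrow> bool" where
  "der_pm G R F \<longleftrightarrow>
     (\<forall>p\<in>poly_over G. F p \<in> poly_over G) \<and>
     (\<forall>p\<in>poly_over G. \<forall>q\<in>poly_over G. p - q \<in> gen_ideal G R \<longrightarrow> F p - F q \<in> gen_ideal G R) \<and>
     (\<forall>p\<in>poly_over G. \<forall>q\<in>poly_over G. F (p + q) - (F p + F q) \<in> gen_ideal G R) \<and>
     (\<forall>p\<in>poly_over G. \<forall>c. F (scalar c * p) - scalar c * F p \<in> gen_ideal G R) \<and>
     (\<forall>p\<in>poly_over G. \<forall>q\<in>poly_over G. F (p * q) - (F p * q + p * F q) \<in> gen_ideal G R)"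

lemma der_pm_ad:
  assumes B: "B \<in> poly_over G"
  shows "der_pm G R (ad B)"
  unfolding der_pm_def
proof (intro conjI ballI allI impI)
  fix p q assume "p - q \<in> gen_ideal G R"
  then have "ad B (p - q) \<in> gen_ideal G R" using B by (rule gen_ideal_ad)
  then show "ad B p - ad B q \<in> gen_ideal G R" by (simp add: ad_def algebra_simps)
next
  fix p q c
  have "ad B (p + q) - (ad B p + ad B q) = 0"
    and "ad B (p * q) - (ad B p * q + p * ad B q) = 0"
    and "ad B (scalar c * p) - scalar c * ad B p = 0"
    by (simp_all add: ad_def algebra_simps scalar_left_commute)
  then show "ad B (p + q) - (ad B p + ad B q) \<in> gen_ideal G R"
    and "ad B (p * q) - (ad B p * q + p * ad B q) \<in> gen_ideal G R"
    and "ad B (scalar c * p) - scalar c * ad B p \<in> gen_ideal G R"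
    by (simp_all add: gen_ideal.zero)
qed (use B in simp)

lemma der_pm_diff:
  assumes F1: "der_pm G R F1" and F2: "der_pm G R F2"
  shows "der_pm G R (\<lambda>p. F1 p - F2 p)"
  unfolding der_pm_def
proof (intro conjI ballI allI impI)
  let ?J = "gen_ideal G R"
  have J: "z \<in> ?J" if "x \<in> ?J" "y \<in> ?J" "z = x - y" for x y z
    using gen_ideal_diff that by blast
  fix p q c assume p: "p \<in> poly_over G" and q: "q \<in> poly_over G"
  show "F1 p - F2 p \<in> poly_over G" using F1 F2 p by (simp add: der_pm_def)
  have "F1 (p + q) - (F1 p + F1 q) \<in> ?J" "F2 (p + q) - (F2 p + F2 q) \<in> ?J"
    using F1 F2 p q by (simp_all add: der_pm_def)
  then show "F1 (p + q) - F2 (p + q) - (F1 p - F2 p + (F1 q - F2 q)) \<in> ?J"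
    by (rule J) (simp add: algebra_simps)
  have "F1 (p * q) - (F1 p * q + p * F1 q) \<in> ?J" "F2 (p * q) - (F2 p * q + p * F2 q) \<in> ?J"
    using F1 F2 p q by (simp_all add: der_pm_def)
  then show "F1 (p * q) - F2 (p * q) - ((F1 p - F2 p) * q + p * (F1 q - F2 q)) \<in> ?J"
    by (rule J) (simp add: algebra_simps)
  have "F1 (scalar c * p) - scalar c * F1 p \<in> ?J" "F2 (scalar c * p) - scalar c * F2 p \<in> ?J"
    using F1 F2 p by (simp_all add: der_pm_def)
  then show "F1 (scalar c * p) - F2 (scalar c * p) - scalar c * (F1 p - F2 p) \<in> ?J"
    by (rule J) (simp add: algebra_simps)
  assume "p - q \<in> ?J"
  then have "F1 p - F1 q \<in> ?J" "F2 p - F2 q \<in> ?J"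
    using F1 F2 p q by (simp_all add: der_pm_def)
  then show "F1 p - F2 p - (F1 q - F2 q) \<in> ?J"
    by (rule J) (simp add: algebra_simps)
qed

definition represents ::
  "'i set \<Rightarrow> 't set \<Rightarrow> (('i, 't) gen npoly \<Rightarrow> ('i, 't) gen npoly) \<Rightarrow>
   (('i, 't) fa \<Rightarrow> ('i, 't) fa) \<Rightarrow> bool" where
  "represents I S F D \<longleftrightarrow> (\<forall>p\<in>Apoly I S. D (coeff p) = coeff (F p))"

lemma represents_ad: "represents I S (ad B) (fa_comm (coeff B))"
  by (simp add: represents_def fa_comm_coeff)

lemma is_der_iff_der_pm:
  assumes rep: "represents I S F D" and closed: "\<forall>p\<in>Apoly I S. F p \<in> Apoly I S"
  shows "is_der I S D \<longleftrightarrow> der_pm (gens I S) (relator_pm I S) F"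
proof -
  have D: "D (coeff p) = coeff (F p)" if "p \<in> Apoly I S" for p
    using rep that by (simp add: represents_def)
  show ?thesis
    unfolding is_der_def der_pm_def ball_alg
    using closed by (simp add: D qeq_coeff fa_add_coeff fa_mult_coeff fa_smult_coeff)
qed

lemma is_der_iff:
  "is_der I S D \<longleftrightarrow> (\<exists>F. represents I S F D \<and> der_pm (gens I S) (relator_pm I S) F)"
proof
  assume d: "is_der I S D"
  define F where "F p = Abs_poly_mapping (D (coeff p))" for p
  have F: "D (coeff p) = coeff (F p) \<and> F p \<in> Apoly I S" if "p \<in> Apoly I S" for p
  proof -
    have "D (coeff p) \<in> alg I S" using d that by (simp add: is_der_def ball_alg)
    then obtain q where "q \<in> Apoly I S" "D (coeff p) = coeff q" by (auto simp: alg_eq)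
    then show ?thesis by (simp add: F_def)
  qed
  then have rep: "represents I S F D" by (simp add: represents_def)
  with F d have "der_pm (gens I S) (relator_pm I S) F" by (simp add: is_der_iff_der_pm)
  with rep show "\<exists>F. represents I S F D \<and> der_pm (gens I S) (relator_pm I S) F" by blast
next
  assume "\<exists>F. represents I S F D \<and> der_pm (gens I S) (relator_pm I S) F"
  then obtain F where rep: "represents I S F D" and F: "der_pm (gens I S) (relator_pm I S) F"
    by blast
  moreover have "\<forall>p\<in>Apoly I S. F p \<in> Apoly I S" using F by (simp add: der_pm_def)
  ultimately show "is_der I S D" by (simp add: is_der_iff_der_pm)
qed

lemma is_semispecial_iff:
  assumes rep: "represents I S F D" and d: "is_der I S D"
  shows "is_semispecial I S D \<longleftrightarrow>
    (\<forall>t\<in>S. \<exists>B\<in>Apoly I S. F (xgen t) - ad B (xgen t) \<in> Jrel I S)"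
proof -
  have "D (coeff (xgen t)) = coeff (F (xgen t))" if "t \<in> S" for t
    using rep xgen_Apoly[OF that, of I] by (simp add: represents_def)
  then show ?thesis
    using d by (simp add: is_semispecial_def bex_alg fa_gen_coeff fa_comm_coeff qeq_coeff)
qed

lemma is_der_s_iff:
  assumes rep: "represents I S F D" and s: "s \<in> S"
  shows "is_der_s I S s D \<longleftrightarrow> is_semispecial I S D \<and> F (xgen s) \<in> Jrel I S"
proof -
  have "D (coeff (xgen s)) = coeff (F (xgen s))"
    using rep xgen_Apoly[OF s, of I] by (simp add: represents_def)
  then show ?thesis by (simp add: is_der_s_def fa_gen_coeff fa_zero_coeff qeq_coeff)
qed

lemma is_inner_iff:
  assumes rep: "represents I S F D"
  shows "is_inner I S D \<longleftrightarrow> (\<exists>B\<in>Apoly I S. \<forall>p\<in>Apoly I S. F p - ad B p \<in> Jrel I S)"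
  using rep unfolding is_inner_def bex_alg ball_alg represents_def
  by (auto simp: fa_comm_coeff qeq_coeff)

section \<open>Centralisers in the free algebra\<close>

definition homogeneous :: "nat \<Rightarrow> 'a npoly \<Rightarrow> bool" where
  "homogeneous m h \<longleftrightarrow> (\<forall>w. coeff h w \<noteq> 0 \<longrightarrow> length w = m)"

definition poly_in :: "'a npoly \<Rightarrow> 'a npoly \<Rightarrow> bool" where
  "poly_in y C \<longleftrightarrow> (\<exists>N c. C = (\<Sum>n<N. scalar (c n) * y ^ n))"

lemma poly_in_commute: "poly_in y C \<Longrightarrow> C * y = y * C"
  by (auto simp: poly_in_def sum_distrib_left sum_distrib_right mult.assoc power_commutes
      scalar_left_commute)

lemma poly_in_scalar: "poly_in y (scalar c)"
  unfolding poly_in_def by (rule exI[of _ 1], rule exI[of _ "\<lambda>_. c"]) simp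

lemma poly_in_uminus:
  assumes "poly_in y C"
  shows "poly_in (- y) C"
proof -
  obtain N c where C: "C = (\<Sum>n<N. scalar (c n) * y ^ n)" using assms by (auto simp: poly_in_def)
  have sign: "scalar ((-1) ^ n) = (-1 :: 'a npoly) ^ n" for n
    by (induct n) (simp_all add: scalar_one scalar_mult scalar_def single_uminus flip: one_monom)
  have twist: "scalar (a * (-1) ^ n) * (- y) ^ n = scalar a * y ^ n" for a n
  proof -
    have "scalar (a * (-1) ^ n) * (- y) ^ n = scalar a * ((-1) ^ n * (-1) ^ n) * y ^ n"
      by (simp add: scalar_mult sign power_minus[of y] mult.assoc)
    also have "(-1 :: 'a npoly) ^ n * (-1) ^ n = 1" by (induct n) auto
    finally show ?thesis by simp
  qed
  have "C = (\<Sum>n<N. scalar (c n * (-1) ^ n) * (- y) ^ n)" by (simp add: C twist)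
  then show ?thesis by (auto simp: poly_in_def)
qed

lemma coeff_homogeneous_mult_left:
  assumes "homogeneous m h"
  shows "coeff (h * C) w = coeff h (take m w) * coeff C (drop m w)"
proof -
  have "coeff (h * C) w = (\<Sum>k\<le>length w. if k = m then coeff h (take m w) * coeff C (drop m w) else 0)"
    unfolding coeff_mult
  proof (rule sum.cong)
    fix k assume "k \<in> {..length w}"
    then have "k \<noteq> m \<Longrightarrow> coeff h (take k w) = 0"
      using assms by (auto simp: homogeneous_def)
    then show "coeff h (take k w) * coeff C (drop k w) =
      (if k = m then coeff h (take m w) * coeff C (drop m w) else 0)" by auto
  qed simp
  also have "\<dots> = coeff h (take m w) * coeff C (drop m w)"
    using assms by (auto simp: homogeneous_def)
  finally show ?thesis .
qed

lemma coeff_homogeneous_mult_right: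
  assumes "homogeneous m h" and "length v = m"
  shows "coeff (C * h) (u @ v) = coeff C u * coeff h v"
proof -
  have "coeff (C * h) (u @ v) = (\<Sum>k\<le>length (u @ v). if k = length u then coeff C u * coeff h v else 0)"
    unfolding coeff_mult
  proof (rule sum.cong)
    fix k assume "k \<in> {..length (u @ v)}"
    then have "k \<noteq> length u \<Longrightarrow> coeff h (drop k (u @ v)) = 0"
      using assms by (auto simp: homogeneous_def)
    then show "coeff C (take k (u @ v)) * coeff h (drop k (u @ v)) =
      (if k = length u then coeff C u * coeff h v else 0)" by auto
  qed simp
  then show ?thesis by simp
qed

definition word_power :: "'a list \<Rightarrow> nat \<Rightarrow> 'a list" where
  "word_power v n = concat (replicate n v)"

lemma word_power_0 [simp]: "word_power v 0 = []"
  by (simp add: word_power_def)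

lemma word_power_Suc [simp]: "word_power v (Suc n) = v @ word_power v n"
  by (simp add: word_power_def)

lemma word_power_append_self [simp]: "word_power v n @ v = v @ word_power v n"
  by (induct n) simp_all

lemma length_word_power [simp]: "length (word_power v n) = n * length v"
  by (induct n) simp_all

context
  fixes h :: "'a npoly" and m :: nat and v :: "'a list"
  assumes hom: "homogeneous m h" and len_v: "length v = m" and coeff_v: "coeff h v = 1"
begin

text \<open>If C commutes with h, then comparing coefficients of C h = h C at the word u v moves
  the first m letters of u to the end.\<close>
lemma commuting_coeff_shift:
  assumes "C * h = h * C"
  shows "coeff C u = coeff h (take m (u @ v)) * coeff C (drop m (u @ v))"
proof -
  have "coeff C u = coeff (C * h) (u @ v)"
    using coeff_homogeneous_mult_right[OF hom len_v] coeff_v by simp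
  also have "\<dots> = coeff h (take m (u @ v)) * coeff C (drop m (u @ v))"
    unfolding assms by (rule coeff_homogeneous_mult_left[OF hom])
  finally show ?thesis .
qed

lemma commuting_coeff_reduce:
  assumes "C * h = h * C" and "m * j \<le> length u"
    and "coeff C (drop (m * j) u @ word_power v j) = 0"
  shows "coeff C u = 0"
  using assms(2,3)
proof (induct j)
  case (Suc j)
  let ?u = "drop (m * j) u @ word_power v j"
  have "drop m (?u @ v) = drop (m * Suc j) u @ word_power v (Suc j)"
    using Suc.prems(1) len_v by (simp add: add.commute)
  then have "coeff C ?u = 0"
    using commuting_coeff_shift[OF assms(1), of ?u] Suc.prems(2) by simp
  then show ?case using Suc.hyps Suc.prems(1) by simp
qed simp

lemma coeff_power_word_power:
  assumes "0 < m"
  shows "coeff (h ^ n) (word_power v k) = (if n = k then 1 else 0)"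
proof (induct n arbitrary: k)
  case 0
  show ?case using assms len_v by (cases k) (auto simp: lookup_one zero_list_def when_def)
next
  case (Suc n)
  have "coeff (h ^ Suc n) (word_power v k)
      = coeff h (take m (word_power v k)) * coeff (h ^ n) (drop m (word_power v k))"
    unfolding power_Suc by (rule coeff_homogeneous_mult_left[OF hom])
  also have "\<dots> = (if Suc n = k then 1 else 0)"
  proof (cases k)
    case 0
    then show ?thesis using hom assms by (auto simp: homogeneous_def)
  next
    case (Suc k')
    then show ?thesis using Suc.hyps len_v coeff_v by simp
  qed
  finally show ?case .
qed

lemma commuting_minus_diagonal:
  assumes "0 < m" and comm: "C * h = h * C"
  obtains C' where "C' * h = h * C'" and "\<And>n. coeff C' (word_power v n) = 0"
    and "poly_in h (C - C')"
proof -
  define N where "N = Suc (Max (insert 0 (length ` supp C)))"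
  have bound: "length u < N" if "coeff C u \<noteq> 0" for u
  proof -
    have "length u \<in> insert 0 (length ` supp C)" using that by (simp add: in_keys_iff)
    then show ?thesis unfolding N_def by (simp add: le_imp_less_Suc)
  qed
  define D where "D = (\<Sum>n<N. scalar (coeff C (word_power v n)) * h ^ n)"
  have D: "poly_in h D"
    unfolding poly_in_def D_def by (intro exI[of _ N] exI[of _ "\<lambda>n. coeff C (word_power v n)"]) simp
  have diag: "coeff D (word_power v n) = coeff C (word_power v n)" for n
  proof -
    have "coeff D (word_power v n) = (\<Sum>k<N. if k = n then coeff C (word_power v k) else 0)"
      unfolding D_def lookup_sum coeff_scalar_mult coeff_power_word_power[OF assms(1)]
      by (rule sum.cong) auto
    also have "\<dots> = coeff C (word_power v n)"
    proof (cases "n < N")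
      case False
      moreover have "n \<le> n * m" using assms(1) by simp
      ultimately have "N \<le> n * m" by linarith
      then have "\<not> length (word_power v n) < N" using len_v by simp
      then have "coeff C (word_power v n) = 0" using bound by blast
      then show ?thesis using False by simp
    qed simp
    finally show ?thesis .
  qed
  show thesis
  proof
    show "(C - D) * h = h * (C - D)"
      using comm poly_in_commute[OF D] by (simp add: algebra_simps)
    show "coeff (C - D) (word_power v n) = 0" for n by (simp add: lookup_minus diag)
    show "poly_in h (C - (C - D))" using D by simp
  qed
qed

end

lemma centralizer_generator:
  assumes comm: "C * monom [a] 1 = monom [a] 1 * C"
  shows "poly_in (monom [a] 1) C"
proof -
  have hom: "homogeneous 1 (monom [a] 1)" by (simp add: homogeneous_def lookup_single when_def)
  have v: "length [a] = 1" "coeff (monom [a] 1) [a] = 1" by simp_all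
  obtain C' where C': "C' * monom [a] 1 = monom [a] 1 * C'"
    "\<And>n. coeff C' (word_power [a] n) = 0" "poly_in (monom [a] 1) (C - C')"
    using commuting_minus_diagonal[OF hom v _ comm] by auto
  have "coeff C' u = 0" for u
    using commuting_coeff_reduce[OF hom v C'(1), of "length u" u] C'(2) by simp
  then have "C' = 0" by (intro poly_mapping_eqI) simp
  then show ?thesis using C'(3) by simp
qed

lemma coeff_omega:
  "coeff (omega I :: ('i, 't) gen npoly) w = (\<Sum>i\<in>I. (if w = [P i, Q i] then 1 else 0) - (if w = [Q i, P i] then 1 else 0))"
  by (simp add: omega_def lookup_sum lookup_minus lookup_single when_def eq_commute)

lemma homogeneous_omega: "homogeneous 2 (omega I)"
  unfolding homogeneous_def
proof (intro allI impI)
  fix w assume "coeff (omega I) w \<noteq> 0"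
  then obtain i where "(if w = [P i, Q i] then 1 else 0) - (if w = [Q i, P i] then 1 else (0::rat)) \<noteq> 0"
    unfolding coeff_omega by (meson sum.neutral)
  then show "length w = 2" by (auto split: if_splits)
qed

lemma coeff_omega_pq: "finite I \<Longrightarrow> i \<in> I \<Longrightarrow> coeff (omega I) [P i, Q i] = 1"
  unfolding coeff_omega by simp

lemma coeff_omega_qp: "finite I \<Longrightarrow> i \<in> I \<Longrightarrow> coeff (omega I) [Q i, P i] = -1"
  unfolding coeff_omega by (simp add: sum_subtractf sum_negf)

text \<open>Words of even length are handled by the general shifting argument;
  for words of odd length the shift forces a coefficient to equal its own negative.\<close>
lemma centralizer_omega:
  assumes fin: "finite I" and i: "i \<in> I" and comm: "C * omega I = omega I * C"
  shows "poly_in (omega I) C"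
proof -
  let ?v = "[P i, Q i]"
  note hom = homogeneous_omega[of I]
  have v: "length ?v = 2" "coeff (omega I) ?v = 1" using coeff_omega_pq[OF fin i] by simp_all
  obtain C' where C': "C' * omega I = omega I * C'"
    "\<And>n. coeff C' (word_power ?v n) = 0" "poly_in (omega I) (C - C')"
    using commuting_minus_diagonal[OF hom v _ comm] by auto
  note shift = commuting_coeff_shift[OF hom v C'(1)]
  have odd: "coeff C' (Q i # word_power ?v n) = 0" for n
  proof -
    have "coeff C' (Q i # word_power ?v n) = - coeff C' (Q i # word_power ?v n)"
      using shift[of "Q i # word_power ?v n"] by (simp add: coeff_omega_qp[OF fin i])
    then show ?thesis by simp
  qed
  have "coeff C' u = 0" for u
  proof -
    define j where "j = length u div 2"
    have "length u = 2 * j \<or> length u = 2 * j + 1" unfolding j_def by presburger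
    then show ?thesis
    proof
      assume "length u = 2 * j"
      then show ?thesis using commuting_coeff_reduce[OF hom v C'(1), of j u] C'(2) by simp
    next
      assume odd_length: "length u = 2 * j + 1"
      then have "length (drop (2 * j) u) = 1" by simp
      then obtain c where c: "drop (2 * j) u = [c]"
        by (cases "drop (2 * j) u") auto
      have "coeff C' (c # word_power ?v j) = 0"
        using shift[of "c # word_power ?v j"] odd[of j] by simp
      then show ?thesis using commuting_coeff_reduce[OF hom v C'(1), of j u] odd_length c by simp
    qed
  qed
  then have "C' = 0" by (intro poly_mapping_eqI) simp
  then show ?thesis using C'(3) by simp
qed

section \<open>Substitution of letters by polynomials\<close>

definition subst_word :: "('a \<Rightarrow> 'b npoly) \<Rightarrow> 'a list \<Rightarrow> 'b npoly" where
  "subst_word \<sigma> w = prod_list (map \<sigma> w)"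

definition subst :: "('a \<Rightarrow> 'b npoly) \<Rightarrow> 'a npoly \<Rightarrow> 'b npoly" where
  "subst \<sigma> p = (\<Sum>w\<in>supp p. scalar (coeff p w) * subst_word \<sigma> w)"

lemma subst_word_append: "subst_word \<sigma> (u @ v) = subst_word \<sigma> u * subst_word \<sigma> v"
  by (simp add: subst_word_def)

lemma subst_superset:
  "finite K \<Longrightarrow> supp p \<subseteq> K \<Longrightarrow> subst \<sigma> p = (\<Sum>w\<in>K. scalar (coeff p w) * subst_word \<sigma> w)"
  unfolding subst_def by (rule sum.mono_neutral_left) (auto simp: in_keys_iff scalar_zero)

lemma subst_add: "subst \<sigma> (p + q) = subst \<sigma> p + subst \<sigma> q"
proof -
  let ?K = "supp p \<union> supp q"
  have "subst \<sigma> (p + q) = (\<Sum>w\<in>?K. scalar (coeff (p + q) w) * subst_word \<sigma> w)"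
    by (rule subst_superset) (auto dest: subsetD[OF keys_add])
  also have "\<dots> = (\<Sum>w\<in>?K. scalar (coeff p w) * subst_word \<sigma> w)
                 + (\<Sum>w\<in>?K. scalar (coeff q w) * subst_word \<sigma> w)"
    by (simp add: lookup_add scalar_add distrib_right sum.distrib)
  also have "\<dots> = subst \<sigma> p + subst \<sigma> q"
    by (simp add: subst_superset[symmetric])
  finally show ?thesis .
qed

lemma subst_zero: "subst \<sigma> 0 = 0"
  by (simp add: subst_def)

lemma subst_diff: "subst \<sigma> (p - q) = subst \<sigma> p - subst \<sigma> q"
  using subst_add[of \<sigma> "p - q" q] by (simp add: algebra_simps)

lemma subst_monom: "subst \<sigma> (monom w c) = scalar c * subst_word \<sigma> w"
  using subst_superset[of "{w}" "monom w c" \<sigma>] by simp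

lemma subst_sum: "subst \<sigma> (sum f K) = (\<Sum>k\<in>K. subst \<sigma> (f k))"
  by (induct K rule: infinite_finite_induct) (simp_all add: subst_zero subst_add)

lemma subst_mult: "subst \<sigma> (p * q) = subst \<sigma> p * subst \<sigma> q"
proof -
  have "p * q = (\<Sum>w\<in>supp p. monom w (coeff p w)) * (\<Sum>w\<in>supp q. monom w (coeff q w))"
    using monom_expansion[of p] monom_expansion[of q] by simp
  also have "\<dots> = (\<Sum>u\<in>supp p. \<Sum>v\<in>supp q. monom (u @ v) (coeff p u * coeff q v))"
    by (simp add: sum_product mult_single plus_list_def)
  finally have pq: "p * q = \<dots>" .
  have "subst \<sigma> (p * q)
      = (\<Sum>u\<in>supp p. \<Sum>v\<in>supp q. scalar (coeff p u * coeff q v) * subst_word \<sigma> (u @ v))"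
    by (simp only: pq subst_sum subst_monom)
  also have "\<dots> = (\<Sum>u\<in>supp p. \<Sum>v\<in>supp q.
      (scalar (coeff p u) * subst_word \<sigma> u) * (scalar (coeff q v) * subst_word \<sigma> v))"
    by (simp only: subst_word_append scalar_mult_mult)
  also have "\<dots> = subst \<sigma> p * subst \<sigma> q"
    by (simp only: subst_def sum_product)
  finally show ?thesis .
qed

lemma subst_scalar: "subst \<sigma> (scalar c) = scalar c"
  using subst_monom[of \<sigma> "[]" c] by (simp add: subst_word_def scalar_one flip: scalar_def)

lemma subst_one: "subst \<sigma> 1 = 1"
  using subst_scalar[of \<sigma> 1] by (simp add: scalar_one)

lemma subst_letter: "subst \<sigma> (monom [g] 1) = \<sigma> g"
  by (simp add: subst_monom scalar_one subst_word_def)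

lemma subst_power: "subst \<sigma> (p ^ n) = subst \<sigma> p ^ n"
  by (induct n) (simp_all add: subst_one subst_mult)

lemma subst_poly_over:
  assumes "p \<in> poly_over G" and "\<And>g. g \<in> G \<Longrightarrow> \<sigma> g \<in> poly_over G'"
  shows "subst \<sigma> p \<in> poly_over G'"
proof -
  have "subst_word \<sigma> w \<in> poly_over G'" if "set w \<subseteq> G" for w
    using that assms(2) by (induct w) (simp_all add: subst_word_def)
  moreover have "set w \<subseteq> G" if "w \<in> supp p" for w
    using assms(1) that by (auto simp: poly_over_def)
  ultimately show ?thesis
    unfolding subst_def by (intro poly_over_sum poly_over_mult poly_over_scalar) auto
qed

lemma subst_congruent:
  assumes p: "p \<in> poly_over G" and cong: "\<And>g. g \<in> G \<Longrightarrow> monom [g] 1 - \<sigma> g \<in> gen_ideal G R"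
    and img: "\<And>g. g \<in> G \<Longrightarrow> \<sigma> g \<in> poly_over G"
  shows "p - subst \<sigma> p \<in> gen_ideal G R"
proof -
  have word: "monom w 1 - subst_word \<sigma> w \<in> gen_ideal G R" if "set w \<subseteq> G" for w
    using that
  proof (induct w)
    case Nil
    then show ?case by (simp add: subst_word_def gen_ideal.zero flip: one_monom)
  next
    case (Cons g w)
    then have g: "g \<in> G" and w: "set w \<subseteq> G" by auto
    have "monom (g # w) 1 - subst_word \<sigma> (g # w)
        = (monom [g] 1 - \<sigma> g) * monom w 1 + \<sigma> g * (monom w 1 - subst_word \<sigma> w)"
      by (simp add: subst_word_def monom_Cons[of g w] algebra_simps)
    also have "\<dots> \<in> gen_ideal G R"
      by (intro gen_ideal_add gen_ideal_rmult gen_ideal_lmult cong img g Cons.hyps w poly_over_monom)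
    finally show ?case .
  qed
  have "p - subst \<sigma> p = (\<Sum>w\<in>supp p. scalar (coeff p w) * (monom w 1 - subst_word \<sigma> w))"
    by (subst (1) monom_expansion[of p])
       (simp add: subst_def right_diff_distrib sum_subtractf scalar_monom)
  also have "\<dots> \<in> gen_ideal G R"
    using p by (intro gen_ideal_sum gen_ideal_lmult word poly_over_scalar) (auto simp: poly_over_def)
  finally show ?thesis .
qed

lemma subst_gen_ideal: "x \<in> gen_ideal G R \<Longrightarrow> subst \<sigma> R = 0 \<Longrightarrow> subst \<sigma> x = 0"
  by (induct rule: gen_ideal.induct) (simp_all add: subst_zero subst_add subst_mult)

section \<open>Eliminating one generator with the relator\<close>

text \<open>The relator expresses X_{t0} as  - omega - sum_{t <> t0} X_t.  Substituting this for
  X_{t0} maps A_{H,S} to the free algebra on the remaining generators.\<close>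
definition elim :: "'i set \<Rightarrow> 't set \<Rightarrow> 't \<Rightarrow> ('i, 't) gen \<Rightarrow> ('i, 't) gen npoly" where
  "elim I S t0 g = (if g = X t0 then - omega I - (\<Sum>t\<in>S - {t0}. xgen t) else monom [g] 1)"

lemma elim_poly_over: "g \<in> gens I S \<Longrightarrow> elim I S t0 g \<in> poly_over (gens I S - {X t0})"
proof (cases "g = X t0")
  case True
  have "omega I \<in> poly_over (gens I S - {X t0})" by (rule omega_poly_over) (auto simp: gens_def)
  moreover have "(\<Sum>t\<in>S - {t0}. xgen t) \<in> poly_over (gens I S - {X t0})"
    by (intro poly_over_sum poly_over_monom) (auto simp: gens_def)
  ultimately show ?thesis using True by (simp add: elim_def)
qed (simp add: elim_def poly_over_monom)

lemma elim_congruent: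
  assumes "finite S" and "t0 \<in> S"
  shows "monom [g] 1 - elim I S t0 g \<in> Jrel I S"
proof (cases "g = X t0")
  case True
  then have "monom [g] 1 - elim I S t0 g = relator_pm I S"
    by (simp add: elim_def relator_pm_def sum.remove[OF assms])
  then show ?thesis by (simp add: gen_ideal_generator)
qed (simp add: elim_def gen_ideal.zero)

lemma subst_elim_relator:
  assumes "finite S" and "t0 \<in> S"
  shows "subst (elim I S t0) (relator_pm I S) = 0"
proof -
  have "subst (elim I S t0) (omega I) = omega I"
    unfolding omega_def subst_sum subst_diff subst_monom
    by (simp add: subst_word_def elim_def scalar_one monom_Cons[of _ "[_]"])
  moreover have "subst (elim I S t0) (\<Sum>t\<in>S. xgen t) = (\<Sum>t\<in>S. elim I S t0 (X t))"
    by (simp only: subst_sum subst_letter)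
  moreover have "\<dots> = elim I S t0 (X t0) + (\<Sum>t\<in>S - {t0}. elim I S t0 (X t))"
    by (rule sum.remove[OF assms])
  moreover have "(\<Sum>t\<in>S - {t0}. elim I S t0 (X t)) = (\<Sum>t\<in>S - {t0}. xgen t)"
    by (rule sum.cong) (auto simp: elim_def)
  ultimately show ?thesis by (simp add: relator_pm_def subst_add elim_def)
qed

text \<open>The image of X_s is the generator X_s if t0 <> s, and -omega if S = {s} = {t0}.
  In both cases its centraliser in the free algebra on the remaining generators consists of
  the polynomials in it.\<close>
lemma centralizer_elim_image:
  assumes fin: "finite I" and t0: "t0 \<noteq> s \<or> S = {s}"
    and C: "C \<in> poly_over (gens I S - {X t0})"
    and comm: "C * elim I S t0 (X s) = elim I S t0 (X s) * C"
  shows "poly_in (elim I S t0 (X s)) C"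
proof (cases "t0 = s")
  case False
  then show ?thesis using comm centralizer_generator by (simp add: elim_def)
next
  case True
  with t0 have S: "S = {s}" by auto
  then have z: "elim I S t0 (X s) = - omega I" using True by (simp add: elim_def)
  show ?thesis
  proof (cases "I = {}")
    case False
    then obtain i where "i \<in> I" by blast
    moreover have "C * omega I = omega I * C" using comm z by simp
    ultimately have "poly_in (omega I) C" by (rule centralizer_omega[OF fin])
    then show ?thesis using z poly_in_uminus by simp
  next
    case True
    then have "gens I S - {X t0} = {}" using S \<open>t0 = s\<close> by (auto simp: gens_def)
    then have "C = scalar (coeff C [])" using C poly_over_empty by metis
    then show ?thesis by (metis poly_in_scalar)
  qed
qed

text \<open>Apply the elimination substitution, use the centraliser result in the
  free algebra, and lift the polynomial back.\<close>
lemma commutant_of_Xs: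
  assumes fin: "finite I" "finite S" and s: "s \<in> S" and B: "B \<in> Apoly I S"
    and comm: "ad B (xgen s) \<in> Jrel I S"
  shows "\<exists>N c. B - (\<Sum>n<N. scalar (c n) * xgen s ^ n) \<in> Jrel I S"
proof -
  obtain t0 where t0: "t0 \<in> S" "t0 \<noteq> s \<or> S = {s}" using s by blast
  let ?\<sigma> = "elim I S t0"
  have img: "?\<sigma> g \<in> Apoly I S" if "g \<in> gens I S" for g
    using elim_poly_over[OF that] poly_over_mono[of _ "gens I S"] by blast
  define C where "C = subst ?\<sigma> B"
  have "subst ?\<sigma> (ad B (xgen s)) = 0"
    by (rule subst_gen_ideal[OF comm subst_elim_relator[OF fin(2) t0(1)]])
  then have "C * ?\<sigma> (X s) = ?\<sigma> (X s) * C"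
    by (simp add: C_def ad_def subst_diff subst_mult subst_letter)
  moreover have "C \<in> poly_over (gens I S - {X t0})"
    unfolding C_def using B by (rule subst_poly_over) (rule elim_poly_over)
  ultimately have "poly_in (?\<sigma> (X s)) C"
    using centralizer_elim_image[OF fin(1) t0(2)] by blast
  then obtain N c where Cz: "C = (\<Sum>n<N. scalar (c n) * ?\<sigma> (X s) ^ n)"
    by (auto simp: poly_in_def)
  let ?P = "\<Sum>n<N. scalar (c n) * xgen s ^ n"
  have P: "?P \<in> Apoly I S" using xgen_Apoly[OF s, of I] by simp
  have "subst ?\<sigma> ?P = C"
    by (simp add: Cz subst_sum subst_mult subst_scalar subst_power subst_letter)
  then have "B - ?P = (B - subst ?\<sigma> B) - (?P - subst ?\<sigma> ?P)" by (simp add: C_def)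
  also have "\<dots> \<in> Jrel I S"
    by (intro gen_ideal_diff subst_congruent B P elim_congruent[OF fin(2) t0(1)] img)
  finally show ?thesis by blast
qed

text \<open>Surjectivity: subtracting [B_s, -] from a semi-special derivation D, where
  D(X_s) = [B_s, X_s], gives an element of Der^S_s that differs from D by an inner derivation.\<close>
lemma semispecial_mod_inner:
  assumes s: "s \<in> S" and D: "is_semispecial I S D"
  shows "\<exists>D'. is_der_s I S s D' \<and>
           (\<exists>B\<in>alg I S. \<forall>x\<in>alg I S. qeq I S (D x) (fa_add (D' x) (fa_comm B x)))"
proof -
  have d: "is_der I S D" using D by (simp add: is_semispecial_def)
  then obtain F where rep: "represents I S F D" and F: "der_pm (gens I S) (relator_pm I S) F"
    by (auto simp: is_der_iff)
  have ss: "\<forall>t\<in>S. \<exists>B\<in>Apoly I S. F (xgen t) - ad B (xgen t) \<in> Jrel I S"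
    using D is_semispecial_iff[OF rep d] by blast
  then obtain Bs where Bs: "Bs \<in> Apoly I S" "F (xgen s) - ad Bs (xgen s) \<in> Jrel I S"
    using s by blast
  define D' where "D' x = fa_diff (D x) (fa_comm (coeff Bs) x)" for x
  define F' where "F' p = F p - ad Bs p" for p
  have rep': "represents I S F' D'"
    using rep by (simp add: represents_def D'_def F'_def fa_comm_coeff fa_diff_coeff)
  have F': "der_pm (gens I S) (relator_pm I S) F'"
    unfolding F'_def by (rule der_pm_diff[OF F der_pm_ad[OF Bs(1)]])
  have d': "is_der I S D'" using rep' F' is_der_iff by blast
  have "is_semispecial I S D'"
    unfolding is_semispecial_iff[OF rep' d']
  proof
    fix t assume "t \<in> S"
    then obtain Bt where Bt: "Bt \<in> Apoly I S" "F (xgen t) - ad Bt (xgen t) \<in> Jrel I S"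
      using ss by blast
    have "F' (xgen t) - ad (Bt - Bs) (xgen t) = F (xgen t) - ad Bt (xgen t)"
      by (simp add: F'_def ad_def algebra_simps)
    then show "\<exists>B\<in>Apoly I S. F' (xgen t) - ad B (xgen t) \<in> Jrel I S"
      using Bt Bs(1) by (intro bexI[of _ "Bt - Bs"]) simp_all
  qed
  moreover have "F' (xgen s) \<in> Jrel I S" using Bs(2) by (simp add: F'_def)
  ultimately have "is_der_s I S s D'" using is_der_s_iff[OF rep' s] by blast
  moreover have "fa_add (D' x) (fa_comm (coeff Bs) x) = D x" for x
    by (simp add: D'_def fa_add_def fa_diff_def)
  moreover have "coeff Bs \<in> alg I S" using Bs(1) by simp
  ultimately show ?thesis by (metis qeq_refl)
qed

text \<open>The inner derivations [X_s^n, -] lie in Der^S_s, since X_s^n commutes with X_s.\<close>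
lemma ad_Xs_power_der_s:
  fixes I :: "'i set" and S :: "'t set" and s :: 't
  assumes s: "s \<in> S"
  shows "is_der_s I S s (\<lambda>x. fa_comm (fa_pow (fa_gen (X s)) n) x)"
proof -
  let ?B = "xgen s ^ n :: ('i, 't) gen npoly"
  have B: "?B \<in> Apoly I S" using xgen_Apoly[OF s, of I] by simp
  have rep: "represents I S (ad ?B) (\<lambda>x. fa_comm (fa_pow (fa_gen (X s)) n) x)"
    using represents_ad[of I S ?B] by (simp add: fa_gen_coeff fa_pow_coeff)
  then have d: "is_der I S (\<lambda>x. fa_comm (fa_pow (fa_gen (X s)) n) x)"
    using der_pm_ad[OF B] is_der_iff by blast
  have "\<forall>t\<in>S. \<exists>B\<in>Apoly I S. ad ?B (xgen t) - ad B (xgen t) \<in> Jrel I S"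
    using B by (auto intro!: bexI[of _ ?B] gen_ideal.zero)
  moreover have "ad ?B (xgen s) = 0" by (simp add: ad_def power_commutes)
  ultimately show ?thesis
    unfolding is_der_s_iff[OF rep s] is_semispecial_iff[OF rep d] by (simp add: gen_ideal.zero)
qed

lemma sum_fa_comm_Xs_power:
  "(\<lambda>w. \<Sum>n<N. c n * fa_comm (fa_pow (fa_gen (X s)) n) (coeff p) w)
   = coeff (ad (\<Sum>n<N. scalar (c n) * xgen s ^ n) p)"
proof -
  have "ad (\<Sum>n<N. scalar (c n) * xgen s ^ n) p = (\<Sum>n<N. scalar (c n) * ad (xgen s ^ n) p)"
    by (simp add: ad_def sum_distrib_left sum_distrib_right sum_subtractf algebra_simps
        scalar_left_commute)
  then show ?thesis
    by (simp add: fun_eq_iff lookup_sum coeff_scalar_mult fa_gen_coeff fa_pow_coeff fa_comm_coeff)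
qed

text \<open>If D = [B, -] kills X_s, then B commutes with X_s modulo the relator, so B is congruent to
  a polynomial in X_s.\<close>
lemma inner_der_s_iff:
  fixes I :: "'i set" and S :: "'t set" and s :: 't
  assumes fin: "finite I" "finite S" and s: "s \<in> S" and D: "is_der_s I S s D"
  shows "is_inner I S D \<longleftrightarrow>
    (\<exists>N (c :: nat \<Rightarrow> rat). \<forall>x\<in>alg I S.
       qeq I S (D x) (\<lambda>w. \<Sum>n<N. c n * fa_comm (fa_pow (fa_gen (X s)) n) x w))"
proof -
  let ?A = "Apoly I S" and ?J = "Jrel I S"
  let ?P = "\<lambda>N c. \<Sum>n<N. scalar (c n) * xgen s ^ n :: ('i, 't) gen npoly"
  have d: "is_der I S D" using D by (simp add: is_der_s_def is_semispecial_def)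
  then obtain F where rep: "represents I S F D" by (auto simp: is_der_iff)
  have kill: "F (xgen s) \<in> ?J" using D is_der_s_iff[OF rep s] by blast
  have P: "?P N c \<in> ?A" for N c using xgen_Apoly[OF s, of I] by simp
  have "is_inner I S D \<longleftrightarrow> (\<exists>B\<in>?A. \<forall>p\<in>?A. F p - ad B p \<in> ?J)"
    by (rule is_inner_iff[OF rep])
  also have "\<dots> \<longleftrightarrow> (\<exists>N c. \<forall>p\<in>?A. F p - ad (?P N c) p \<in> ?J)"
  proof
    assume "\<exists>B\<in>?A. \<forall>p\<in>?A. F p - ad B p \<in> ?J"
    then obtain B where B: "B \<in> ?A" "\<forall>p\<in>?A. F p - ad B p \<in> ?J" by blast
    have "ad B (xgen s) = F (xgen s) - (F (xgen s) - ad B (xgen s))" by simp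
    also have "\<dots> \<in> ?J" using kill B xgen_Apoly[OF s] by (blast intro: gen_ideal_diff)
    finally obtain N c where Nc: "B - ?P N c \<in> ?J" using commutant_of_Xs[OF fin s B(1)] by blast
    have "F p - ad (?P N c) p \<in> ?J" if p: "p \<in> ?A" for p
    proof -
      have "F p - ad (?P N c) p = (F p - ad B p) - ad p (B - ?P N c)"
        by (simp add: ad_def algebra_simps)
      also have "\<dots> \<in> ?J" using B(2) p Nc by (blast intro: gen_ideal_diff gen_ideal_ad)
      finally show ?thesis .
    qed
    then show "\<exists>N c. \<forall>p\<in>?A. F p - ad (?P N c) p \<in> ?J" by blast
  qed (use P in blast)
  also have "\<dots> \<longleftrightarrow> (\<exists>N (c :: nat \<Rightarrow> rat). \<forall>x\<in>alg I S.
       qeq I S (D x) (\<lambda>w. \<Sum>n<N. c n * fa_comm (fa_pow (fa_gen (X s)) n) x w))"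
    using rep by (simp add: ball_alg represents_def sum_fa_comm_Xs_power qeq_coeff)
  finally show ?thesis .
qed

theorem lemma7p6:
  fixes I :: "'i set" and S :: "'t set" and s :: 't
  assumes "finite I" and "finite S" and "s \<in> S"
  shows "(\<forall>D. is_semispecial I S D \<longrightarrow>
            (\<exists>D'. is_der_s I S s D' \<and>
               (\<exists>B\<in>alg I S. \<forall>x\<in>alg I S. qeq I S (D x) (fa_add (D' x) (fa_comm B x)))))
       \<and> (\<forall>n. is_der_s I S s (\<lambda>x. fa_comm (fa_pow (fa_gen (X s)) n) x))
       \<and> (\<forall>D. is_der_s I S s D \<longrightarrow>
            (is_inner I S D \<longleftrightarrow>
              (\<exists>N (c :: nat \<Rightarrow> rat). \<forall>x\<in>alg I S.
                 qeq I S (D x) (\<lambda>w. \<Sum>n<N. c n * fa_comm (fa_pow (fa_gen (X s)) n) x w))))"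
  using semispecial_mod_inner[OF assms(3)] ad_Xs_power_der_s[OF assms(3)]
    inner_der_s_iff[OF assms] by blast

end
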